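(* Assume (A3) and (A5). For each $\gamma<\gamma_0$ with $\gamma\ne1$ there is a nice constant $\kappa$ (depending on $\gamma$) such that $$\sup_{m\ge1}\sup_{\nu\in[0,1]}|\epsilon_{m,L}(\nu)|\le\frac{\kappa}{L^{\min(\gamma,1)}},$$ while if $\gamma=1<\gamma_0$, $\sup_{m\ge1}\sup_{\nu}|\epsilon_{m,L}(\nu)|\le\kappa\frac{\log L}{L}$.
   Context: For $m\ge1$, $\mathcal S_m$ is a spectral density on $[0,1]$ with covariances $r_m(k)=\int_0^1\mathcal S_m(\nu)e^{2i\pi\nu k}d\nu$. (A3): $\sup_m\max_\nu\mathcal S_m<\infty$, $\inf_m\min_\nu\mathcal S_m>0$. (A5): for some $\gamma_0>0$, $\sup_m\sum_n(1+|n|)^{\gamma_0}|r_m(n)|<\infty$. $\mathcal R_{m,L}$ is the $L\times L$ Toeplitz matrix with entries $r_m(k-k')$, $\mathbf a_L(\nu)=L^{-1/2}(1,e^{2i\pi\nu},\dots,e^{2i\pi(L-1)\nu})^T$, and $\epsilon_{m,L}(\nu)=\mathcal S_m(\nu)\mathbf a_L^H(\nu)\mathcal R_{m,L}^{-1}\mathbf a_L(\nu)-1$. A nice constant is independent of $L$ (and $m,\nu$). *)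

theory Defs
  imports "HOL-Analysis.Analysis" "Jordan_Normal_Form.Gauss_Jordan_Elimination"
begin

definition covar :: "(real \<Rightarrow> real) \<Rightarrow> int \<Rightarrow> complex" where
  "covar S k = integral {0..1} (\<lambda>\<nu>. complex_of_real (S \<nu>) * cis (2 * pi * \<nu> * real_of_int k))"

definition toeplitz_cov :: "(real \<Rightarrow> real) \<Rightarrow> nat \<Rightarrow> complex mat" where
  "toeplitz_cov S L = Matrix.mat L L (\<lambda>(k, k'). covar S (int k - int k'))"

definition steer :: "nat \<Rightarrow> real \<Rightarrow> complex vec" where
  "steer L \<nu> = Matrix.vec L (\<lambda>k. cis (2 * pi * \<nu> * real k) / complex_of_real (sqrt (real L)))"

definition eps :: "(real \<Rightarrow> real) \<Rightarrow> nat \<Rightarrow> real \<Rightarrow> complex" where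
  "eps S L \<nu> = complex_of_real (S \<nu>) *
      (scalar_prod (conjugate (steer L \<nu>)) (mult_mat_vec (the (mat_inverse (toeplitz_cov S L))) (steer L \<nu>))) - 1"

end

theory Submission
  imports Defs "Jordan_Normal_Form.Determinant"
begin

text \<open>
  Write \<open>a\<close> for the steering vector, \<open>R\<close> for the Toeplitz matrix, \<open>s = S \<nu>\<close> and
  \<open>\<delta> = s a - R a\<close>. As \<open>R\<close> is Hermitian, \<open>\<delta>\<^sup>H R\<^sup>-\<^sup>1 a = s a\<^sup>H R\<^sup>-\<^sup>1 a - 1 = \<epsilon>\<close>, and
  \<open>s R\<^sup>-\<^sup>1 a = a + R\<^sup>-\<^sup>1 \<delta>\<close>, so \<open>s \<epsilon> = \<delta>\<^sup>H a + \<delta>\<^sup>H R\<^sup>-\<^sup>1 \<delta>\<close>. Since \<open>R \<ge> b I\<close> for \<open>b \<le> S\<close>,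
  this gives \<open>|\<epsilon>| \<le> (\<Sum>\<^sub>i |\<delta>\<^sub>i| |a\<^sub>i| + |\<delta>|\<^sup>2 / b) / s\<close>.

  By Fourier inversion \<open>s = \<Sum>\<^sub>n r n * cis (- 2 * pi * \<nu> * n)\<close>, so \<open>\<delta>\<^sub>i\<close> is \<open>1 / sqrt L\<close> times the
  tail of this series over the \<open>n\<close> outside the window \<open>{i - L + 1..i}\<close>. An index \<open>n\<close> lies
  outside at most \<open>min |n| L \<le> L powr (1 - g) * (1 + |n|) powr \<gamma>\<^sub>0\<close> of the \<open>L\<close> windows, for
  \<open>0 \<le> g \<le> min 1 \<gamma>\<^sub>0\<close>; hence \<open>|\<epsilon>| = O(L powr - g)\<close> uniformly in \<open>m\<close> and \<open>\<nu>\<close>, which for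
  \<open>\<gamma>\<^sub>0 > 1\<close> is even \<open>O(1 / L)\<close>.

  Fourier inversion for a continuous \<open>S\<close> with absolutely summable coefficients rests on the
  uniqueness of Fourier coefficients. After splitting a function into its parts even and odd about
  \<open>1/2\<close>, that reduces to the Weierstrass approximation of even functions by polynomials in
  \<open>cos (2 * pi * t)\<close>.
\<close>

section \<open>Uniqueness of Fourier coefficients\<close>

lemma has_integral_cis_int:
  fixes j :: int
  shows "((\<lambda>\<nu>. cis (2 * pi * \<nu> * real_of_int j)) has_integral (if j = 0 then 1 else 0)) {0..1}"
proof (cases "j = 0")
  case True
  then show ?thesis using has_integral_const_real[of "1::complex" 0 1] by simp
next
  case False
  define c where "c = 2 * pi * real_of_int j"
  have c0: "c \<noteq> 0" using False by (simp add: c_def)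
  define F where "F = (\<lambda>\<nu>::real. cis (c * \<nu>) / (\<i> * complex_of_real c))"
  have F': "(F has_vector_derivative cis (2 * pi * x * real_of_int j)) (at x within {0..1})" for x
  proof -
    have "((\<lambda>x. cis (c * x)) has_derivative (\<lambda>t. (t * c) *\<^sub>R (\<i> * cis (c * x)))) (at x within {0..1})"
      by (intro has_derivative_cis derivative_eq_intros) auto
    then have "((\<lambda>x. cis (c * x)) has_vector_derivative (c *\<^sub>R (\<i> * cis (c * x)))) (at x within {0..1})"
      by (simp add: has_vector_derivative_def)
    then have "(F has_vector_derivative (c *\<^sub>R (\<i> * cis (c * x))) / (\<i> * complex_of_real c)) (at x within {0..1})"
      unfolding F_def by (intro has_vector_derivative_divide)
    moreover have "(c *\<^sub>R (\<i> * cis (c * x))) / (\<i> * complex_of_real c) = cis (2 * pi * x * real_of_int j)"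
      using c0 by (simp add: c_def scaleR_conv_of_real field_simps)
    ultimately show ?thesis by simp
  qed
  have "((\<lambda>\<nu>. cis (2 * pi * \<nu> * real_of_int j)) has_integral (F 1 - F 0)) {0..1}"
    by (rule fundamental_theorem_of_calculus) (auto intro: F')
  moreover have "F 1 = F 0"
    using cis_multiple_2pi[of "real_of_int j"] by (simp add: F_def c_def)
  ultimately show ?thesis using False by simp
qed

inductive cos_poly :: "(real \<Rightarrow> real) \<Rightarrow> bool" where
  cos_poly_monom: "cos_poly (\<lambda>\<theta>. a * cos (real k * \<theta>))"
| cos_poly_add: "cos_poly P \<Longrightarrow> cos_poly Q \<Longrightarrow> cos_poly (\<lambda>\<theta>. P \<theta> + Q \<theta>)"

lemma cos_poly_const: "cos_poly (\<lambda>\<theta>. a)"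
  using cos_poly_monom[of a 0] by simp

lemma cos_poly_cmult: "cos_poly P \<Longrightarrow> cos_poly (\<lambda>\<theta>. c * P \<theta>)"
proof (induction rule: cos_poly.induct)
  case (cos_poly_monom a k)
  then show ?case using cos_poly.cos_poly_monom[of "c * a" k] by (simp add: mult.assoc)
next
  case (cos_poly_add P Q)
  then show ?case using cos_poly.cos_poly_add[of "\<lambda>\<theta>. c * P \<theta>" "\<lambda>\<theta>. c * Q \<theta>"]
    by (simp add: distrib_left)
qed

lemma cos_poly_mult_cos: "cos_poly P \<Longrightarrow> cos_poly (\<lambda>\<theta>. P \<theta> * cos \<theta>)"
proof (induction rule: cos_poly.induct)
  case (cos_poly_monom a k)
  show ?case
  proof (cases k)
    case 0
    then show ?thesis using cos_poly.cos_poly_monom[of a 1] by simp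
  next
    case (Suc j)
    have eq: "a * cos (real k * \<theta>) * cos \<theta> = (a/2) * cos (real (Suc k) * \<theta>) + (a/2) * cos (real j * \<theta>)"
      for \<theta>
    proof -
      have "cos (real (Suc k) * \<theta>) = cos (real k * \<theta> + \<theta>)" by (simp add: algebra_simps)
      moreover have "cos (real j * \<theta>) = cos (real k * \<theta> - \<theta>)" using Suc by (simp add: algebra_simps)
      ultimately show ?thesis by (simp add: cos_add cos_diff algebra_simps)
    qed
    show ?thesis unfolding eq by (intro cos_poly.cos_poly_add cos_poly.cos_poly_monom)
  qed
next
  case (cos_poly_add P Q)
  then show ?case using cos_poly.cos_poly_add[of "\<lambda>\<theta>. P \<theta> * cos \<theta>" "\<lambda>\<theta>. Q \<theta> * cos \<theta>"]
    by (simp add: distrib_right)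
qed

lemma cos_poly_mult_affine_cos: "cos_poly P \<Longrightarrow> cos_poly (\<lambda>\<theta>. P \<theta> * (\<alpha> + \<beta> * cos \<theta>))"
proof -
  assume "cos_poly P"
  then have "cos_poly (\<lambda>\<theta>. \<alpha> * P \<theta> + \<beta> * (P \<theta> * cos \<theta>))"
    by (intro cos_poly_add cos_poly_cmult cos_poly_mult_cos)
  then show ?thesis by (simp add: algebra_simps)
qed

lemma cos_poly_sum:
  "finite A \<Longrightarrow> (\<And>i. i \<in> A \<Longrightarrow> cos_poly (P i)) \<Longrightarrow> cos_poly (\<lambda>\<theta>. \<Sum>i\<in>A. P i \<theta>)"
proof (induction rule: finite_induct)
  case empty
  then show ?case using cos_poly_const[of 0] by simp
next
  case (insert x F)
  then show ?case using cos_poly_add[of "P x" "\<lambda>\<theta>. \<Sum>i\<in>F. P i \<theta>"] by simp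
qed

lemma cos_poly_Bernstein_term:
  "cos_poly (\<lambda>\<theta>. c * ((1 + cos \<theta>) / 2) ^ i * (1 - (1 + cos \<theta>) / 2) ^ j)"
proof -
  have x: "(1 + cos \<theta>) / 2 = 1/2 + 1/2 * cos \<theta>"
    and y: "1 - (1/2 + 1/2 * cos \<theta>) = 1/2 + (-1/2) * cos \<theta>" for \<theta> :: real
    by (simp_all add: field_simps)
  have "cos_poly (\<lambda>\<theta>. c * (1/2 + 1/2 * cos \<theta>) ^ i * (1/2 + (-1/2) * cos \<theta>) ^ j)"
  proof (induction i)
    case 0
    show ?case
    proof (induction j)
      case 0
      then show ?case using cos_poly_const[of c] by simp
    next
      case (Suc j)
      from cos_poly_mult_affine_cos[OF Suc, of "1/2" "-1/2"] show ?case by (simp only: power_Suc2 mult_ac)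
    qed
  next
    case (Suc i)
    from cos_poly_mult_affine_cos[OF Suc, of "1/2" "1/2"] show ?case by (simp only: power_Suc2 mult_ac)
  qed
  then show ?thesis by (simp only: x y)
qed

lemma continuous_on_cos_poly: "cos_poly P \<Longrightarrow> continuous_on UNIV P"
  by (induction rule: cos_poly.induct) (auto intro!: continuous_intros)

lemma continuous_on_cos_poly_2pi: "cos_poly P \<Longrightarrow> continuous_on S (\<lambda>t. P (2 * pi * t))"
  using continuous_on_cos_poly continuous_on_compose2[of UNIV P S "\<lambda>t. 2 * pi * t"]
  by (auto intro!: continuous_intros)

lemma integral_cos_poly_eq_0:
  fixes h :: "real \<Rightarrow> real"
  assumes hc: "continuous_on {0..1} h"
    and hcos: "\<And>n::int. integral {0..1} (\<lambda>t. h t * cos (2 * pi * real_of_int n * t)) = 0"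
    and hsin: "\<And>n::int. integral {0..1} (\<lambda>t. h t * sin (2 * pi * real_of_int n * t)) = 0"
  shows "cos_poly P \<Longrightarrow> integral {0..1} (\<lambda>t. h t * P (2 * pi * t)) = 0 \<and>
                      integral {0..1} (\<lambda>t. h t * sin (2 * pi * t) * P (2 * pi * t)) = 0"
proof (induction rule: cos_poly.induct)
  case (cos_poly_monom a k)
  have int_sin: "(\<lambda>t. h t * sin (2 * pi * real_of_int n * t)) integrable_on {0..1}" for n :: int
    by (intro integrable_continuous_interval continuous_intros hc)
  have "(\<lambda>t. h t * (a * cos (real k * (2 * pi * t)))) =
        (\<lambda>t. a * (h t * cos (2 * pi * real_of_int (int k) * t)))"
    by (auto simp: algebra_simps)
  then have cos_part: "integral {0..1} (\<lambda>t. h t * (a * cos (real k * (2 * pi * t)))) = 0"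
    using hcos[of "int k"] by simp
  have "sin (2 * pi * t) * cos (real k * (2 * pi * t)) =
     (sin (2 * pi * real_of_int (1 + int k) * t) + sin (2 * pi * real_of_int (1 - int k) * t)) / 2" for t
    using sin_add[of "2 * pi * t" "real k * (2 * pi * t)"] sin_diff[of "2 * pi * t" "real k * (2 * pi * t)"]
    by (simp add: algebra_simps)
  then have "(\<lambda>t. h t * sin (2 * pi * t) * (a * cos (real k * (2 * pi * t)))) =
     (\<lambda>t. (a/2) * (h t * sin (2 * pi * real_of_int (1 + int k) * t))
        + (a/2) * (h t * sin (2 * pi * real_of_int (1 - int k) * t)))"
    by (auto simp: algebra_simps add_divide_distrib)
  moreover have "integral {0..1} (\<lambda>t. (a/2) * (h t * sin (2 * pi * real_of_int (1 + int k) * t))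
        + (a/2) * (h t * sin (2 * pi * real_of_int (1 - int k) * t))) =
      integral {0..1} (\<lambda>t. (a/2) * (h t * sin (2 * pi * real_of_int (1 + int k) * t)))
        + integral {0..1} (\<lambda>t. (a/2) * (h t * sin (2 * pi * real_of_int (1 - int k) * t)))"
    by (rule integral_add) (intro integrable_continuous_interval continuous_intros hc)+
  ultimately have sin_part: "integral {0..1} (\<lambda>t. h t * sin (2 * pi * t) * (a * cos (real k * (2 * pi * t)))) = 0"
    using hsin[of "1 + int k"] hsin[of "1 - int k"] by (simp only: integral_mult[OF int_sin, symmetric])
  with cos_part show ?case by simp
next
  case (cos_poly_add P Q)
  have "continuous_on {0..1} (\<lambda>t. h t * P (2 * pi * t))" "continuous_on {0..1} (\<lambda>t. h t * Q (2 * pi * t))"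
    "continuous_on {0..1} (\<lambda>t. h t * sin (2 * pi * t) * P (2 * pi * t))"
    "continuous_on {0..1} (\<lambda>t. h t * sin (2 * pi * t) * Q (2 * pi * t))"
    using continuous_on_cos_poly_2pi[OF cos_poly_add.hyps(1)] continuous_on_cos_poly_2pi[OF cos_poly_add.hyps(2)]
    by (auto intro!: continuous_intros hc)
  then show ?case
    using cos_poly_add.IH by (simp add: distrib_left integral_add integrable_continuous_interval)
qed

lemma arccos_cos_2pi_symmetric:
  fixes g :: "real \<Rightarrow> 'a"
  assumes gs: "\<And>t. t \<in> {0..1} \<Longrightarrow> g (1 - t) = g t" and t: "t \<in> {0..1}"
  shows "g (arccos (cos (2 * pi * t)) / (2 * pi)) = g t"
proof (cases "t \<le> 1/2")
  case True
  then have "arccos (cos (2 * pi * t)) = 2 * pi * t" using t by (intro arccos_cos) auto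
  then show ?thesis by simp
next
  case False
  have "cos (2 * pi * t) = cos (2 * pi * (1 - t))"
    using cos_diff[of "2 * pi" "2 * pi * t"] by (simp add: algebra_simps)
  also have "arccos \<dots> = 2 * pi * (1 - t)" using False t by (intro arccos_cos) auto
  finally show ?thesis using gs[OF t] by simp
qed

text \<open>Polynomials in \<open>cos (2 * pi * t)\<close> are dense among the continuous functions on \<open>[0, 1]\<close> that are
  symmetric about \<open>1/2\<close>: substitute \<open>x = (1 + cos (2 * pi * t)) / 2\<close>, which maps \<open>[0, 1/2]\<close>
  bijectively onto \<open>[0, 1]\<close>, and use Bernstein approximation in \<open>x\<close>.\<close>
lemma cos_poly_approx_symmetric:
  fixes g :: "real \<Rightarrow> real"
  assumes gc: "continuous_on {0..1} g" and gs: "\<And>t. t \<in> {0..1} \<Longrightarrow> g (1 - t) = g t"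
    and e: "e > 0"
  obtains P where "cos_poly P" "\<And>t. t \<in> {0..1} \<Longrightarrow> \<bar>g t - P (2 * pi * t)\<bar> < e"
proof -
  define f where "f = (\<lambda>x. g (arccos (2 * x - 1) / (2 * pi)))"
  have "continuous_on {0..1} (\<lambda>x. arccos (2 * x - 1) / (2 * pi))"
    by (intro continuous_intros continuous_on_arccos') auto
  moreover have "(\<lambda>x. arccos (2 * x - 1) / (2 * pi)) ` {0..1} \<subseteq> {0..1}"
  proof clarify
    fix x :: real assume "x \<in> {0..1}"
    then have "0 \<le> arccos (2 * x - 1)" "arccos (2 * x - 1) \<le> pi"
      by (auto intro!: arccos_lbound arccos_ubound)
    then show "arccos (2 * x - 1) / (2 * pi) \<in> {0..1}" by (auto simp: divide_simps)
  qed
  ultimately have "continuous_on {0..1} f" unfolding f_def using continuous_on_compose2[OF gc] by blast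
  then obtain N where N: "\<And>x. x \<in> {0..1} \<Longrightarrow> \<bar>f x - (\<Sum>k\<le>N. f (k/N) * Bernstein N k x)\<bar> < e"
    using Bernstein_Weierstrass[OF _ e] by blast
  define P where "P = (\<lambda>\<theta>. \<Sum>k\<le>N. f (k/N) * Bernstein N k ((1 + cos \<theta>) / 2))"
  have "cos_poly P" unfolding P_def Bernstein_def
  proof (intro cos_poly_sum)
    fix k
    show "cos_poly (\<lambda>\<theta>. f (real k / real N) *
       (real (N choose k) * ((1 + cos \<theta>) / 2) ^ k * (1 - (1 + cos \<theta>) / 2) ^ (N - k)))"
      using cos_poly_Bernstein_term[of "f (real k / real N) * real (N choose k)" k "N - k"]
      by (simp add: mult.assoc)
  qed simp
  moreover have "\<bar>g t - P (2 * pi * t)\<bar> < e" if t: "t \<in> {0..1}" for t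
  proof -
    define x where "x = (1 + cos (2 * pi * t)) / 2"
    have "x \<in> {0..1}"
      using cos_ge_minus_one[of "2 * pi * t"] cos_le_one[of "2 * pi * t"]
      unfolding x_def atLeastAtMost_iff add_divide_distrib by (intro conjI; linarith)
    moreover have "f x = g t"
      using arccos_cos_2pi_symmetric[of g, OF gs t] unfolding f_def x_def by (simp add: field_simps)
    ultimately show ?thesis using N[of x] unfolding P_def x_def by simp
  qed
  ultimately show ?thesis using that by blast
qed

lemma integral_reflect_unit_interval:
  fixes F :: "real \<Rightarrow> 'a::euclidean_space"
  assumes "continuous_on {0..1} F"
  shows "integral {0..1} (\<lambda>t. F (1 - t)) = integral {0..1} F"
proof -
  have "(F has_integral integral {0..1} F) (cbox 0 1)"
    using integrable_continuous_interval[OF assms] by (simp add: has_integral_integral)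
  from has_integral_affinity[OF this, of "-1" 1]
  have "((\<lambda>x. F (1 - x)) has_integral integral {0..1} F) ((\<lambda>x. - x + 1) ` {0..1})"
    by simp
  moreover have "(\<lambda>x. - x + 1) ` {0..1::real} = {0..1}"
    using image_affinity_atLeastAtMost[of "-1" 1 0 1] by simp
  ultimately show ?thesis by (simp add: integral_unique)
qed

lemma continuous_on_reflect_unit_interval:
  fixes F :: "real \<Rightarrow> 'a::topological_space"
  assumes "continuous_on {0..1} F"
  shows "continuous_on {0..1} (\<lambda>t. F (1 - t))"
proof -
  have "continuous_on {0..1} (\<lambda>t::real. 1 - t)" by (intro continuous_intros)
  then show ?thesis by (rule continuous_on_compose2[OF assms]) auto
qed

lemma integral_reflect_mult_symmetric:
  fixes f g :: "real \<Rightarrow> real"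
  assumes fc: "continuous_on {0..1} f" and gc: "continuous_on {0..1} g"
    and gs: "\<And>t. t \<in> {0..1} \<Longrightarrow> g (1 - t) = g t"
  shows "integral {0..1} (\<lambda>t. f (1 - t) * g t) = integral {0..1} (\<lambda>t. f t * g t)"
proof -
  have "integral {0..1} (\<lambda>t. f (1 - t) * g t) = integral {0..1} (\<lambda>t. f (1 - t) * g (1 - (1 - t)))"
    by simp
  also have "\<dots> = integral {0..1} (\<lambda>t. f t * g (1 - t))"
    by (rule integral_reflect_unit_interval)
      (intro continuous_intros fc continuous_on_reflect_unit_interval gc)
  also have "\<dots> = integral {0..1} (\<lambda>t. f t * g t)"
    by (rule integral_cong) (simp add: gs)
  finally show ?thesis .
qed

lemma integral_mult_symmetric_eq_0:
  fixes \<psi> g :: "real \<Rightarrow> real"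
  assumes \<psi>c: "continuous_on {0..1} \<psi>" and gc: "continuous_on {0..1} g"
    and gs: "\<And>t. t \<in> {0..1} \<Longrightarrow> g (1 - t) = g t"
    and orth: "\<And>P. cos_poly P \<Longrightarrow> integral {0..1} (\<lambda>t. \<psi> t * P (2 * pi * t)) = 0"
  shows "integral {0..1} (\<lambda>t. \<psi> t * g t) = 0"
proof -
  obtain B where B: "B \<ge> 0" "\<And>t. t \<in> {0..1} \<Longrightarrow> norm (\<psi> t) \<le> B"
    using continuous_on_compact_bound[OF compact_Icc \<psi>c] by blast
  define M where "M = B + 1"
  have M: "M > 0" "\<And>t. t \<in> {0..1} \<Longrightarrow> norm (\<psi> t) \<le> M"
    using B by (force simp: M_def)+
  have int_g: "(\<lambda>t. \<psi> t * g t) integrable_on {0..1}"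
    by (intro integrable_continuous_interval continuous_intros \<psi>c gc)
  have "\<bar>integral {0..1} (\<lambda>t. \<psi> t * g t)\<bar> \<le> 0 + e" if e: "e > 0" for e
  proof -
    have eM: "e / M > 0" using e M(1) by simp
    obtain P where P: "cos_poly P" "\<And>t. t \<in> {0..1} \<Longrightarrow> \<bar>g t - P (2 * pi * t)\<bar> < e / M"
      using cos_poly_approx_symmetric[OF gc gs eM] by blast
    have int_P: "(\<lambda>t. \<psi> t * P (2 * pi * t)) integrable_on {0..1}"
      by (intro integrable_continuous_interval continuous_intros \<psi>c continuous_on_cos_poly_2pi P(1))
    have "integral {0..1} (\<lambda>t. \<psi> t * g t) = integral {0..1} (\<lambda>t. \<psi> t * g t - \<psi> t * P (2 * pi * t))"
      using integral_diff[OF int_g int_P] orth[OF P(1)] by simp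
    also have "norm \<dots> \<le> integral {0..1::real} (\<lambda>t. M * (e / M))"
    proof (rule integral_norm_bound_integral)
      show "(\<lambda>t. \<psi> t * g t - \<psi> t * P (2 * pi * t)) integrable_on {0..1}"
        by (rule integrable_diff[OF int_g int_P])
      show "(\<lambda>t::real. M * (e / M)) integrable_on {0..1}" by (rule integrable_const_ivl)
      show "norm (\<psi> t * g t - \<psi> t * P (2 * pi * t)) \<le> M * (e / M)" if "t \<in> {0..1}" for t
      proof -
        have "norm (\<psi> t * g t - \<psi> t * P (2 * pi * t)) = norm (\<psi> t) * \<bar>g t - P (2 * pi * t)\<bar>"
          by (simp add: right_diff_distrib[symmetric] abs_mult)
        also have "\<dots> \<le> M * (e / M)"
          using M(2)[OF that] P(2)[OF that] by (intro mult_mono) auto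
        finally show ?thesis .
      qed
    qed
    also have "\<dots> = e" using M(1) by simp
    finally show ?thesis by simp
  qed
  then have "\<bar>integral {0..1} (\<lambda>t. \<psi> t * g t)\<bar> \<le> 0" by (rule field_le_epsilon)
  then show ?thesis by simp
qed

text \<open>If \<open>f\<close> is orthogonal to all cosine polynomials, then so is \<open>f (1 - t)\<close> against symmetric
  functions, hence \<open>f t + f (1 - t)\<close> is orthogonal to itself.\<close>
lemma symmetrization_eq_0:
  fixes f :: "real \<Rightarrow> real"
  assumes fc: "continuous_on {0..1} f"
    and orth: "\<And>P. cos_poly P \<Longrightarrow> integral {0..1} (\<lambda>t. f t * P (2 * pi * t)) = 0"
    and t: "t \<in> {0..1}"
  shows "f t + f (1 - t) = 0"
proof -
  define g where "g = (\<lambda>t. f t + f (1 - t))"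
  have frc: "continuous_on {0..1} (\<lambda>t. f (1 - t))" by (rule continuous_on_reflect_unit_interval[OF fc])
  have gc: "continuous_on {0..1} g" unfolding g_def by (intro continuous_intros fc frc)
  have gs: "g (1 - t) = g t" for t unfolding g_def by simp
  have fg: "integral {0..1} (\<lambda>t. f t * g t) = 0"
    by (rule integral_mult_symmetric_eq_0[OF fc gc gs orth])
  have "integral {0..1} (\<lambda>t. g t * g t) = integral {0..1} (\<lambda>t. f t * g t + f (1 - t) * g t)"
    by (simp add: g_def distrib_right)
  also have "\<dots> = integral {0..1} (\<lambda>t. f t * g t) + integral {0..1} (\<lambda>t. f (1 - t) * g t)"
    by (intro integral_add integrable_continuous_interval continuous_intros fc frc gc)
  also have "\<dots> = 0"
    using fg integral_reflect_mult_symmetric[OF fc gc gs] by simp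
  finally have "\<forall>x\<in>{0..1}. g x * g x = 0"
    by (subst integral_eq_0_iff[symmetric]) (auto intro!: continuous_intros gc)
  then show ?thesis using t unfolding g_def by simp
qed

lemma continuous_orthogonal_trig_eq_0:
  fixes h :: "real \<Rightarrow> real"
  assumes hc: "continuous_on {0..1} h"
    and hcos: "\<And>n::int. integral {0..1} (\<lambda>t. h t * cos (2 * pi * real_of_int n * t)) = 0"
    and hsin: "\<And>n::int. integral {0..1} (\<lambda>t. h t * sin (2 * pi * real_of_int n * t)) = 0"
    and t: "t \<in> {0..1}"
  shows "h t = 0"
proof -
  have orth_even: "integral {0..1} (\<lambda>t. h t * P (2 * pi * t)) = 0"
    and orth_odd: "integral {0..1} (\<lambda>t. h t * sin (2 * pi * t) * P (2 * pi * t)) = 0"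
    if "cos_poly P" for P
    using integral_cos_poly_eq_0[OF hc hcos hsin that] by auto
  have even: "h x + h (1 - x) = 0" if "x \<in> {0..1}" for x
    by (rule symmetrization_eq_0[OF hc orth_even that])
  have odd: "h x * sin (2 * pi * x) + h (1 - x) * sin (2 * pi * (1 - x)) = 0" if "x \<in> {0..1}" for x
    by (rule symmetrization_eq_0[of "\<lambda>t. h t * sin (2 * pi * t)", OF _ orth_odd that])
      (intro continuous_intros hc)
  have sin_reflect: "sin (2 * pi * (1 - x)) = - sin (2 * pi * x)" for x
    using sin_diff[of "2 * pi" "2 * pi * x"] by (simp add: algebra_simps)
  have h_open: "h x = 0" if x: "x \<in> {0<..<1/2}" for x
  proof -
    have "(h x - h (1 - x)) * sin (2 * pi * x) = 0"
      using odd[of x] x sin_reflect[of x] by (simp add: left_diff_distrib)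
    moreover have "sin (2 * pi * x) > 0" using x by (intro sin_gt_zero) auto
    ultimately have "h x = h (1 - x)" by simp
    then show ?thesis using even[of x] x by simp
  qed
  have h_half: "h x = 0" if x: "x \<in> {0..1/2}" for x
  proof -
    have "continuous_on (closure {0<..<1/2::real}) h"
      by (rule continuous_on_subset[OF hc]) auto
    then show ?thesis using continuous_constant_on_closure[of "{0<..<1/2}" h 0 x] h_open x by auto
  qed
  show ?thesis
  proof (cases "t \<le> 1/2")
    case True then show ?thesis using h_half t by auto
  next
    case False then show ?thesis using even[OF t] h_half[of "1 - t"] t by auto
  qed
qed

lemma integral_mult_cos_sin_eq_0:
  fixes g :: "real \<Rightarrow> complex"
  assumes gc: "continuous_on {0..1} g"
    and orth: "\<And>k::int. integral {0..1} (\<lambda>t. g t * cis (2 * pi * t * real_of_int k)) = 0"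
  shows "integral {0..1} (\<lambda>t. g t * complex_of_real (cos (2 * pi * real_of_int n * t))) = 0"
    and "integral {0..1} (\<lambda>t. g t * complex_of_real (sin (2 * pi * real_of_int n * t))) = 0"
proof -
  define e where "e = (\<lambda>k t. g t * cis (2 * pi * t * real_of_int k))"
  have int_e: "e k integrable_on {0..1}" for k
    unfolding e_def by (intro integrable_continuous_interval continuous_intros gc)
  have "integral {0..1} (\<lambda>t. g t * complex_of_real (cos (2 * pi * real_of_int n * t))) =
        integral {0..1} (\<lambda>t. (e n t + e (- n) t) / 2)"
  proof (rule integral_cong)
    fix t
    have cos_cis: "complex_of_real (cos (2 * pi * real_of_int n * t)) =
          (cis (2 * pi * t * real_of_int n) + cis (2 * pi * t * real_of_int (- n))) / 2"
      by (simp add: complex_eq_iff mult_ac)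
    show "g t * complex_of_real (cos (2 * pi * real_of_int n * t)) = (e n t + e (- n) t) / 2"
      unfolding e_def cos_cis by (simp only: distrib_left times_divide_eq_right)
  qed
  also have "\<dots> = (integral {0..1} (e n) + integral {0..1} (e (- n))) / 2"
    using integral_add[OF int_e[of n] int_e[of "- n"]] by simp
  finally show "integral {0..1} (\<lambda>t. g t * complex_of_real (cos (2 * pi * real_of_int n * t))) = 0"
    using orth[of n] orth[of "- n"] by (simp add: e_def)
  have "integral {0..1} (\<lambda>t. g t * complex_of_real (sin (2 * pi * real_of_int n * t))) =
        integral {0..1} (\<lambda>t. (e n t - e (- n) t) / (2 * \<i>))"
  proof (rule integral_cong)
    fix t
    have "cis (2 * pi * t * real_of_int n) - cis (2 * pi * t * real_of_int (- n)) =
          2 * \<i> * complex_of_real (sin (2 * pi * real_of_int n * t))"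
      by (simp add: complex_eq_iff mult_ac)
    then have sin_cis: "complex_of_real (sin (2 * pi * real_of_int n * t)) =
          (cis (2 * pi * t * real_of_int n) - cis (2 * pi * t * real_of_int (- n))) / (2 * \<i>)"
      by simp
    show "g t * complex_of_real (sin (2 * pi * real_of_int n * t)) = (e n t - e (- n) t) / (2 * \<i>)"
      unfolding e_def sin_cis by (simp only: right_diff_distrib times_divide_eq_right)
  qed
  also have "\<dots> = (integral {0..1} (e n) - integral {0..1} (e (- n))) / (2 * \<i>)"
    using integral_diff[OF int_e[of n] int_e[of "- n"]] by simp
  finally show "integral {0..1} (\<lambda>t. g t * complex_of_real (sin (2 * pi * real_of_int n * t))) = 0"
    using orth[of n] orth[of "- n"] by (simp add: e_def)
qed

lemma continuous_orthogonal_cis_eq_0: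
  fixes g :: "real \<Rightarrow> complex"
  assumes gc: "continuous_on {0..1} g"
    and orth: "\<And>k::int. integral {0..1} (\<lambda>t. g t * cis (2 * pi * t * real_of_int k)) = 0"
    and t: "t \<in> {0..1}"
  shows "g t = 0"
proof -
  note cos0 = integral_mult_cos_sin_eq_0(1)[OF gc orth]
  note sin0 = integral_mult_cos_sin_eq_0(2)[OF gc orth]
  have Re0: "integral {0..1} (\<lambda>t. Re (g t) * f t) = 0"
    and Im0: "integral {0..1} (\<lambda>t. Im (g t) * f t) = 0"
    if "continuous_on {0..1} f" "integral {0..1} (\<lambda>t. g t * complex_of_real (f t)) = 0" for f
  proof -
    have "(\<lambda>t. g t * complex_of_real (f t)) integrable_on {0..1}"
      by (intro integrable_continuous_interval continuous_intros gc that(1))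
    from integral_linear[OF this bounded_linear_Re] integral_linear[OF this bounded_linear_Im]
    show "integral {0..1} (\<lambda>t. Re (g t) * f t) = 0" "integral {0..1} (\<lambda>t. Im (g t) * f t) = 0"
      using that(2) by (simp_all add: o_def)
  qed
  have "Re (g t) = 0"
    by (rule continuous_orthogonal_trig_eq_0[OF _ Re0[OF _ cos0] Re0[OF _ sin0] t])
      (intro continuous_intros gc)+
  moreover have "Im (g t) = 0"
    by (rule continuous_orthogonal_trig_eq_0[OF _ Im0[OF _ cos0] Im0[OF _ sin0] t])
      (intro continuous_intros gc)+
  ultimately show ?thesis by (simp add: complex_eq_iff)
qed

section \<open>Fourier inversion\<close>

definition weighted_abs_sum_le :: "real \<Rightarrow> (int \<Rightarrow> complex) \<Rightarrow> real \<Rightarrow> bool" where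
  "weighted_abs_sum_le \<gamma> r C \<longleftrightarrow>
     (\<lambda>n. (1 + \<bar>real_of_int n\<bar>) powr \<gamma> * cmod (r n)) summable_on UNIV \<and>
     (\<Sum>\<^sub>\<infinity>n. (1 + \<bar>real_of_int n\<bar>) powr \<gamma> * cmod (r n)) \<le> C"

lemma weighted_tail_bound:
  fixes r :: "int \<Rightarrow> complex" and A :: "int set"
  assumes r: "weighted_abs_sum_le \<gamma> r C" and \<gamma>: "\<gamma> \<ge> 0" and x: "x \<ge> 0"
    and A: "\<And>n. n \<in> A \<Longrightarrow> x \<le> \<bar>real_of_int n\<bar>"
  shows "(\<lambda>n. cmod (r n)) summable_on A"
    "(\<Sum>\<^sub>\<infinity>n\<in>A. cmod (r n)) \<le> C / (1 + x) powr \<gamma>"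
proof -
  define W where "W = (\<lambda>n. (1 + \<bar>real_of_int n\<bar>) powr \<gamma> * cmod (r n))"
  have W: "W summable_on UNIV" "(\<Sum>\<^sub>\<infinity>n. W n) \<le> C"
    using r unfolding weighted_abs_sum_le_def W_def by auto
  have "(\<lambda>n. cmod (r n)) summable_on UNIV"
  proof (rule summable_on_comparison_test[OF W(1)])
    fix n :: int
    have "1 * cmod (r n) \<le> W n"
      unfolding W_def using \<gamma> by (intro mult_right_mono ge_one_powr_ge_zero) auto
    then show "cmod (r n) \<le> W n" by simp
  qed simp
  then show summable: "(\<lambda>n. cmod (r n)) summable_on A"
    using summable_on_subset_banach by fastforce
  have px: "(1 + x) powr \<gamma> > 0" using x by simp
  have W_A: "W summable_on A" using summable_on_subset_banach[OF W(1)] by simp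
  have "(\<Sum>\<^sub>\<infinity>n\<in>A. cmod (r n)) \<le> (\<Sum>\<^sub>\<infinity>n\<in>A. W n / (1 + x) powr \<gamma>)"
  proof (rule infsum_mono[OF summable])
    show "(\<lambda>n. W n / (1 + x) powr \<gamma>) summable_on A"
      using summable_on_cmult_left[OF W_A, of "1 / (1 + x) powr \<gamma>"] by simp
    fix n assume n: "n \<in> A"
    have "(1 + x) powr \<gamma> \<le> (1 + \<bar>real_of_int n\<bar>) powr \<gamma>"
      using A[OF n] x \<gamma> by (intro powr_mono2) auto
    then have "(1 + x) powr \<gamma> * cmod (r n) \<le> W n"
      unfolding W_def by (intro mult_right_mono) auto
    then show "cmod (r n) \<le> W n / (1 + x) powr \<gamma>"
      using px by (simp add: field_simps)
  qed
  also have "\<dots> = (\<Sum>\<^sub>\<infinity>n\<in>A. W n) / (1 + x) powr \<gamma>"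
    using infsum_cmult_left[of "1 / (1 + x) powr \<gamma>" W A] W_A by simp
  also have "\<dots> \<le> C / (1 + x) powr \<gamma>"
  proof (rule divide_right_mono)
    have "(\<Sum>\<^sub>\<infinity>n\<in>A. W n) \<le> (\<Sum>\<^sub>\<infinity>n. W n)"
      using W_A W(1) by (intro infsum_mono_neutral) (auto simp: W_def)
    with W(2) show "(\<Sum>\<^sub>\<infinity>n\<in>A. W n) \<le> C" by simp
  qed (use px in auto)
  finally show "(\<Sum>\<^sub>\<infinity>n\<in>A. cmod (r n)) \<le> C / (1 + x) powr \<gamma>" .
qed

lemma weighted_abs_sum_le_nonneg: "weighted_abs_sum_le \<gamma> r C \<Longrightarrow> C \<ge> 0"
  unfolding weighted_abs_sum_le_def by (metis (no_types, lifting) infsum_nonneg norm_ge_zero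
      order_trans powr_ge_zero zero_le_mult_iff)

definition fourier_sum :: "(int \<Rightarrow> complex) \<Rightarrow> real \<Rightarrow> complex" where
  "fourier_sum r t = (\<Sum>\<^sub>\<infinity>n. r n * cis (- (2 * pi * t * real_of_int n)))"

lemma has_integral_partial_fourier_sum_cis:
  fixes r :: "int \<Rightarrow> complex"
  assumes A: "finite A"
  shows "((\<lambda>t. (\<Sum>n\<in>A. r n * cis (- (2 * pi * t * real_of_int n))) * cis (2 * pi * t * real_of_int k))
           has_integral (if k \<in> A then r k else 0)) {0..1}"
proof -
  have eq: "(\<Sum>n\<in>A. r n * cis (- (2 * pi * t * real_of_int n))) * cis (2 * pi * t * real_of_int k) =
            (\<Sum>n\<in>A. r n * cis (2 * pi * t * real_of_int (k - n)))" for t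
    unfolding sum_distrib_right by (intro sum.cong refl) (simp add: cis_mult mult.assoc algebra_simps)
  have "((\<lambda>t. \<Sum>n\<in>A. r n * cis (2 * pi * t * real_of_int (k - n))) has_integral
          (\<Sum>n\<in>A. r n * (if k - n = 0 then 1 else 0))) {0..1}"
    by (intro has_integral_sum has_integral_mult_right has_integral_cis_int A)
  moreover have "(\<Sum>n\<in>A. r n * (if k - n = 0 then 1 else 0)) = (if k \<in> A then r k else 0)"
    using A by (simp add: if_distrib sum.delta' cong: if_cong)
  ultimately show ?thesis unfolding eq by simp
qed

lemma fourier_sum_partial_sum_approx:
  assumes r: "weighted_abs_sum_le \<gamma> r C" and \<gamma>: "\<gamma> \<ge> 0"
  shows "norm (fourier_sum r t - (\<Sum>n\<in>{- int N..int N}. r n * cis (- (2 * pi * t * real_of_int n))))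
           \<le> C / (1 + real N) powr \<gamma>"
proof -
  define e where "e = (\<lambda>n. r n * cis (- (2 * pi * t * real_of_int n)))"
  define A where "A = {- int N..int N}"
  have norm_e: "norm (e n) = cmod (r n)" for n unfolding e_def by (simp add: norm_mult)
  have abs_summable: "(\<lambda>n. norm (e n)) summable_on B" for B
    unfolding norm_e using weighted_tail_bound(1)[OF r \<gamma> order.refl, of B] by simp
  have "fourier_sum r t = (\<Sum>\<^sub>\<infinity>n\<in>A \<union> - A. e n)" unfolding fourier_sum_def e_def by simp
  also have "\<dots> = (\<Sum>n\<in>A. e n) + (\<Sum>\<^sub>\<infinity>n\<in>- A. e n)"
    by (subst infsum_Un_disjoint) (auto intro: abs_summable_summable abs_summable simp: A_def)
  finally have "norm (fourier_sum r t - (\<Sum>n\<in>A. e n)) = norm (\<Sum>\<^sub>\<infinity>n\<in>- A. e n)" by simp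
  also have "\<dots> \<le> (\<Sum>\<^sub>\<infinity>n\<in>- A. cmod (r n))"
    using norm_infsum_bound[OF abs_summable] unfolding norm_e .
  also have "\<dots> \<le> C / (1 + real N) powr \<gamma>"
    by (rule weighted_tail_bound(2)[OF r \<gamma>]) (auto simp: A_def)
  finally show ?thesis unfolding e_def A_def .
qed

lemma uniform_limit_fourier_sum:
  assumes r: "weighted_abs_sum_le \<gamma> r C" and \<gamma>: "\<gamma> > 0"
  shows "uniform_limit UNIV (\<lambda>N t. \<Sum>n\<in>{- int N..int N}. r n * cis (- (2 * pi * t * real_of_int n)))
           (fourier_sum r) sequentially"
proof (rule uniform_limitI)
  fix e :: real assume e: "e > 0"
  have "(\<lambda>N. C * (1 + real N) powr (- \<gamma>)) \<longlonglongrightarrow> 0"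
    by (intro tendsto_mult_right_zero tendsto_neg_powr
        filterlim_tendsto_add_at_top[OF tendsto_const filterlim_real_sequentially]) (use \<gamma> in auto)
  then have "\<forall>\<^sub>F N in sequentially. C / (1 + real N) powr \<gamma> < e"
    using order_tendstoD(2)[OF _ e] by (simp add: powr_minus divide_inverse)
  then show "\<forall>\<^sub>F N in sequentially. \<forall>t\<in>UNIV.
      dist (\<Sum>n\<in>{- int N..int N}. r n * cis (- (2 * pi * t * real_of_int n))) (fourier_sum r t) < e"
    by eventually_elim
      (use fourier_sum_partial_sum_approx[OF r less_imp_le[OF \<gamma>]] in
        \<open>auto simp: dist_norm norm_minus_commute intro: le_less_trans\<close>)
qed

lemma continuous_on_fourier_sum:
  assumes "weighted_abs_sum_le \<gamma> r C" and "\<gamma> > 0"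
  shows "continuous_on UNIV (fourier_sum r)"
  by (rule uniform_limit_theorem[OF _ uniform_limit_fourier_sum[OF assms]])
    (auto intro!: always_eventually continuous_intros)

lemma integral_fourier_sum_cis:
  assumes r: "weighted_abs_sum_le \<gamma> r C" and \<gamma>: "\<gamma> > 0"
  shows "integral {0..1} (\<lambda>t. fourier_sum r t * cis (2 * pi * t * real_of_int k)) = r k"
proof -
  define P where "P = (\<lambda>N t. \<Sum>n\<in>{- int N..int N}. r n * cis (- (2 * pi * t * real_of_int n)))"
  define c where "c = (\<lambda>t. cis (2 * pi * t * real_of_int k))"
  have "uniform_limit (cbox 0 1) (\<lambda>N t. P N t * c t) (\<lambda>t. fourier_sum r t * c t) sequentially"
  proof (rule uniform_limitI)
    fix e :: real assume "e > 0"
    with uniform_limit_fourier_sum[OF r \<gamma>]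
    have "\<forall>\<^sub>F N in sequentially. \<forall>t\<in>UNIV. dist (P N t) (fourier_sum r t) < e"
      unfolding P_def by (auto dest: uniform_limitD)
    then show "\<forall>\<^sub>F N in sequentially. \<forall>t\<in>cbox 0 1. dist (P N t * c t) (fourier_sum r t * c t) < e"
      by eventually_elim (simp add: dist_norm norm_mult c_def left_diff_distrib[symmetric])
  qed
  moreover have "continuous_on (cbox 0 1) (\<lambda>t. P N t * c t)" for N
    unfolding P_def c_def by (intro continuous_intros)
  ultimately obtain I J where I: "\<And>N. ((\<lambda>t. P N t * c t) has_integral I N) (cbox 0 1)"
    and J: "((\<lambda>t. fourier_sum r t * c t) has_integral J) (cbox 0 1)" and lim: "I \<longlonglongrightarrow> J"
    by (rule uniform_limit_integral_cbox) auto
  have "I N = r k" if "nat \<bar>k\<bar> \<le> N" for N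
  proof -
    have "k \<in> {- int N..int N}" using that by auto
    then have "((\<lambda>t. P N t * c t) has_integral r k) (cbox 0 1)"
      using has_integral_partial_fourier_sum_cis[of "{- int N..int N}" r k] by (simp add: P_def c_def)
    then show ?thesis using I[of N] by (rule has_integral_unique[symmetric])
  qed
  then have "I \<longlonglongrightarrow> r k"
    by (intro tendsto_eventually) (auto simp: eventually_sequentially)
  with lim have "J = r k" by (rule LIMSEQ_unique)
  with J show ?thesis by (simp add: c_def integral_unique)
qed

lemma fourier_inversion:
  fixes S :: "real \<Rightarrow> real"
  assumes S: "continuous_on {0..1} S" and r: "weighted_abs_sum_le \<gamma> (covar S) C" and \<gamma>: "\<gamma> > 0"
    and \<nu>: "\<nu> \<in> {0..1}"
  shows "fourier_sum (covar S) \<nu> = complex_of_real (S \<nu>)"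
proof -
  define g where "g = (\<lambda>t. complex_of_real (S t) - fourier_sum (covar S) t)"
  have T: "continuous_on {0..1} (fourier_sum (covar S))"
    using continuous_on_fourier_sum[OF r \<gamma>] by (rule continuous_on_subset) auto
  have g: "continuous_on {0..1} g" unfolding g_def by (intro continuous_intros S T)
  have "integral {0..1} (\<lambda>t. g t * cis (2 * pi * t * real_of_int k)) = 0" for k
  proof -
    have "integral {0..1} (\<lambda>t. g t * cis (2 * pi * t * real_of_int k)) =
          integral {0..1} (\<lambda>t. complex_of_real (S t) * cis (2 * pi * t * real_of_int k))
          - integral {0..1} (\<lambda>t. fourier_sum (covar S) t * cis (2 * pi * t * real_of_int k))"
      unfolding g_def left_diff_distrib
      by (intro integral_diff integrable_continuous_interval continuous_intros S T)
    then show ?thesis unfolding integral_fourier_sum_cis[OF r \<gamma>] by (simp add: covar_def)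
  qed
  then have "g \<nu> = 0" by (rule continuous_orthogonal_cis_eq_0[OF g _ \<nu>])
  then show ?thesis unfolding g_def by simp
qed

section \<open>Toeplitz covariance matrices\<close>

lemma cnj_covar: "cnj (covar S n) = covar S (- n)"
  unfolding covar_def integral_cnj by (simp add: cis_cnj)

lemma covar_const_1: "covar (\<lambda>_. 1) n = (if n = 0 then 1 else 0)"
  using integral_unique[OF has_integral_cis_int[of n]] by (simp add: covar_def)

lemma covar_quadratic_form:
  fixes w :: "real \<Rightarrow> real" and x :: "nat \<Rightarrow> complex"
  assumes w: "continuous_on {0..1} w"
  shows "(\<Sum>i<L. cnj (x i) * (\<Sum>j<L. covar w (int i - int j) * x j))
    = complex_of_real (integral {0..1} (\<lambda>\<nu>. w \<nu> * (cmod (\<Sum>i<L. cnj (x i) * cis (2 * pi * \<nu> * real i)))\<^sup>2))"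
proof -
  define P where "P = (\<lambda>\<nu>. \<Sum>i<L. cnj (x i) * cis (2 * pi * \<nu> * real i))"
  define f where "f = (\<lambda>i j \<nu>. cnj (x i) * x j *
                          (complex_of_real (w \<nu>) * cis (2 * pi * \<nu> * real_of_int (int i - int j))))"
  have f: "f i j integrable_on {0..1}" for i j
    unfolding f_def by (intro integrable_continuous_interval continuous_intros w)
  have norm_P: "complex_of_real ((cmod (P \<nu>))\<^sup>2) =
        (\<Sum>i<L. \<Sum>j<L. cnj (x i) * x j * cis (2 * pi * \<nu> * real_of_int (int i - int j)))" for \<nu>
  proof -
    have "complex_of_real ((cmod (P \<nu>))\<^sup>2) = P \<nu> * cnj (P \<nu>)" by (rule complex_norm_square)
    also have "\<dots> = (\<Sum>i<L. \<Sum>j<L. cnj (x i) * cis (2 * pi * \<nu> * real i) * (x j * cis (- (2 * pi * \<nu> * real j))))"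
      unfolding P_def by (simp add: sum_product cis_cnj)
    also have "\<dots> = (\<Sum>i<L. \<Sum>j<L. cnj (x i) * x j * cis (2 * pi * \<nu> * real_of_int (int i - int j)))"
    proof (intro sum.cong refl)
      fix i j
      have "cis (2 * pi * \<nu> * real i) * cis (- (2 * pi * \<nu> * real j)) = cis (2 * pi * \<nu> * real_of_int (int i - int j))"
        by (simp add: cis_mult algebra_simps)
      then show "cnj (x i) * cis (2 * pi * \<nu> * real i) * (x j * cis (- (2 * pi * \<nu> * real j))) =
                 cnj (x i) * x j * cis (2 * pi * \<nu> * real_of_int (int i - int j))"
        by (metis (no_types, lifting) mult.assoc mult.left_commute)
    qed
    finally show ?thesis .
  qed
  have "(\<Sum>i<L. cnj (x i) * (\<Sum>j<L. covar w (int i - int j) * x j)) = (\<Sum>i<L. \<Sum>j<L. integral {0..1} (f i j))"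
    unfolding f_def covar_def by (simp add: sum_distrib_left algebra_simps)
  also have "\<dots> = integral {0..1} (\<lambda>\<nu>. \<Sum>i<L. \<Sum>j<L. f i j \<nu>)"
    by (simp add: Henstock_Kurzweil_Integration.integral_sum integrable_sum f)
  also have "\<dots> = integral {0..1} (\<lambda>\<nu>. complex_of_real (w \<nu> * (cmod (P \<nu>))\<^sup>2))"
    using norm_P unfolding f_def by (simp add: sum_distrib_left algebra_simps)
  also have "\<dots> = complex_of_real (integral {0..1} (\<lambda>\<nu>. w \<nu> * (cmod (P \<nu>))\<^sup>2))"
  proof -
    have "(\<lambda>\<nu>. w \<nu> * (cmod (P \<nu>))\<^sup>2) integrable_on {0..1}"
      unfolding P_def by (intro integrable_continuous_interval continuous_intros w)
    from integral_linear[OF this bounded_linear_of_real] show ?thesis by (simp add: o_def)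
  qed
  finally show ?thesis unfolding P_def .
qed

lemma toeplitz_quadratic_form_ge:
  fixes S :: "real \<Rightarrow> real" and x :: "nat \<Rightarrow> complex"
  assumes S: "continuous_on {0..1} S" and Sb: "\<And>\<nu>. \<nu> \<in> {0..1} \<Longrightarrow> b \<le> S \<nu>"
  shows "b * (\<Sum>i<L. (cmod (x i))\<^sup>2) \<le> Re (\<Sum>i<L. cnj (x i) * (\<Sum>j<L. covar S (int i - int j) * x j))"
proof -
  define P where "P = (\<lambda>\<nu>. \<Sum>i<L. cnj (x i) * cis (2 * pi * \<nu> * real i))"
  have P: "continuous_on {0..1} P" unfolding P_def by (intro continuous_intros)
  have "complex_of_real (\<Sum>i<L. (cmod (x i))\<^sup>2) = (\<Sum>i<L. cnj (x i) * x i)"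
    unfolding of_real_sum complex_norm_square by (simp add: mult.commute)
  also have "\<dots> = (\<Sum>i<L. cnj (x i) * (\<Sum>j<L. covar (\<lambda>_. 1) (int i - int j) * x j))"
  proof (intro sum.cong refl arg_cong[where f = "\<lambda>z. cnj (x _) * z"])
    fix i assume "i \<in> {..<L}"
    have "(\<Sum>j<L. covar (\<lambda>_. 1) (int i - int j) * x j) = (\<Sum>j<L. if i = j then x j else 0)"
      by (intro sum.cong refl) (auto simp: covar_const_1)
    with \<open>i \<in> {..<L}\<close> show "x i = (\<Sum>j<L. covar (\<lambda>_. 1) (int i - int j) * x j)" by simp
  qed
  also have "\<dots> = complex_of_real (integral {0..1} (\<lambda>\<nu>. 1 * (cmod (P \<nu>))\<^sup>2))"
    unfolding P_def by (rule covar_quadratic_form) simp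
  finally have norm_eq: "(\<Sum>i<L. (cmod (x i))\<^sup>2) = integral {0..1} (\<lambda>\<nu>. (cmod (P \<nu>))\<^sup>2)"
    by (simp only: of_real_eq_iff) simp
  have "b * integral {0..1} (\<lambda>\<nu>. (cmod (P \<nu>))\<^sup>2) = integral {0..1} (\<lambda>\<nu>. b * (cmod (P \<nu>))\<^sup>2)"
    by (intro integral_mult integrable_continuous_interval continuous_intros P)
  also have "\<dots> \<le> integral {0..1} (\<lambda>\<nu>. S \<nu> * (cmod (P \<nu>))\<^sup>2)"
    by (intro integral_le integrable_continuous_interval continuous_intros S P mult_right_mono Sb) auto
  also have "\<dots> = Re (\<Sum>i<L. cnj (x i) * (\<Sum>j<L. covar S (int i - int j) * x j))"
    unfolding P_def covar_quadratic_form[OF S] by simp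
  finally show ?thesis unfolding norm_eq .
qed

lemma mat_inverse_coercive:
  fixes R :: "complex mat" and b :: real
  assumes R: "R \<in> carrier_mat L L" and b: "b > 0"
    and coercive: "\<And>x. b * (\<Sum>i<L. (cmod (x i))\<^sup>2) \<le> Re (\<Sum>i<L. cnj (x i) * (\<Sum>j<L. R $$ (i, j) * x j))"
  obtains G where "mat_inverse R = Some G" "G \<in> carrier_mat L L" "R * G = 1\<^sub>m L" "G * R = 1\<^sub>m L"
proof -
  have "det R \<noteq> 0"
  proof
    assume "det R = 0"
    then obtain v where v: "v \<in> carrier_vec L" "v \<noteq> 0\<^sub>v L" "R *\<^sub>v v = 0\<^sub>v L"
      using det_0_iff_vec_prod_zero_field[OF R] by blast
    have "(\<Sum>j<L. R $$ (i, j) * v $ j) = 0" if "i < L" for i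
    proof -
      have "(R *\<^sub>v v) $ i = (\<Sum>j<L. R $$ (i, j) * v $ j)"
        using that R v(1) by (auto simp: scalar_prod_def lessThan_atLeast0 intro!: sum.cong)
      with v(3) that show ?thesis by simp
    qed
    then have "b * (\<Sum>i<L. (cmod (v $ i))\<^sup>2) \<le> 0"
      using coercive[of "\<lambda>i. v $ i"] by simp
    then have "(\<Sum>i<L. (cmod (v $ i))\<^sup>2) \<le> 0" using b by (simp add: mult_le_0_iff)
    then have "(\<Sum>i<L. (cmod (v $ i))\<^sup>2) = 0" by (intro order.antisym sum_nonneg) auto
    then have "\<forall>i\<in>{..<L}. (cmod (v $ i))\<^sup>2 = 0"
      by (subst sum_nonneg_eq_0_iff[symmetric]) auto
    then have "v = 0\<^sub>v L" using v(1) by (intro eq_vecI) auto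
    with v(2) show False by simp
  qed
  then have unit: "R \<in> Units (ring_mat TYPE(complex) L ())" by (rule det_non_zero_imp_unit[OF R])
  obtain G where G: "mat_inverse R = Some G"
  proof (cases "mat_inverse R")
    case None
    then have "R \<notin> Units (ring_mat TYPE(complex) L ())" by (rule mat_inverse(1)[OF R])
    with unit show ?thesis by simp
  next
    case (Some G)
    then show ?thesis by (rule that)
  qed
  then have "R * G = 1\<^sub>m L \<and> G * R = 1\<^sub>m L \<and> G \<in> carrier_mat L L" by (rule mat_inverse(2)[OF R])
  with G that show ?thesis by blast
qed

lemma sum_mult_inverse_apply:
  fixes A B :: "nat \<Rightarrow> nat \<Rightarrow> complex"
  assumes AB: "\<And>i j. i < L \<Longrightarrow> j < L \<Longrightarrow> (\<Sum>k<L. A i k * B k j) = (if i = j then 1 else 0)"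
    and i: "i < L"
  shows "(\<Sum>j<L. A i j * (\<Sum>k<L. B j k * v k)) = v i"
proof -
  have "(\<Sum>j<L. A i j * (\<Sum>k<L. B j k * v k)) = (\<Sum>j<L. \<Sum>k<L. A i j * B j k * v k)"
    by (simp add: sum_distrib_left mult.assoc)
  also have "\<dots> = (\<Sum>k<L. \<Sum>j<L. A i j * B j k * v k)" by (rule sum.swap)
  also have "\<dots> = (\<Sum>k<L. (\<Sum>j<L. A i j * B j k) * v k)" by (simp add: sum_distrib_right)
  also have "\<dots> = (\<Sum>k<L. if i = k then v k else 0)" using AB i by (intro sum.cong) auto
  also have "\<dots> = v i" using i by simp
  finally show ?thesis .
qed

lemma young_mult_le: "c > 0 \<Longrightarrow> u * v \<le> (c / 2) * u\<^sup>2 + v\<^sup>2 / (2 * c)" for u v c :: real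
proof -
  assume c: "c > 0"
  have "0 \<le> (c * u - v)\<^sup>2" by simp
  then have "2 * c * (u * v) \<le> c\<^sup>2 * u\<^sup>2 + v\<^sup>2" by (simp add: power2_eq_square algebra_simps)
  then show ?thesis using c by (simp add: field_simps power2_eq_square)
qed

text \<open>For \<open>R \<ge> b\<close> and \<open>R y = \<delta>\<close>: \<open>b |y|\<^sup>2 \<le> Re (y\<^sup>H \<delta>) \<le> |y| |\<delta>|\<close>, hence \<open>|\<delta>\<^sup>H y| \<le> |\<delta>|\<^sup>2 / b\<close>.\<close>
lemma coercive_solution_bound:
  fixes R :: "nat \<Rightarrow> nat \<Rightarrow> complex" and y \<delta> :: "nat \<Rightarrow> complex"
  assumes coercive: "\<And>x. b * (\<Sum>i<L. (cmod (x i))\<^sup>2) \<le> Re (\<Sum>i<L. cnj (x i) * (\<Sum>j<L. R i j * x j))"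
    and b: "b > 0" and solves: "\<And>i. i < L \<Longrightarrow> (\<Sum>j<L. R i j * y j) = \<delta> i"
  shows "cmod (\<Sum>i<L. cnj (\<delta> i) * y i) \<le> (\<Sum>i<L. (cmod (\<delta> i))\<^sup>2) / b"
proof -
  define Nd where "Nd = (\<Sum>i<L. (cmod (\<delta> i))\<^sup>2)"
  define Ny where "Ny = (\<Sum>i<L. (cmod (y i))\<^sup>2)"
  have young: "(\<Sum>i<L. cmod (y i) * cmod (\<delta> i)) \<le> (b / 2) * Ny + Nd / (2 * b)"
  proof -
    have "(\<Sum>i<L. cmod (y i) * cmod (\<delta> i)) \<le> (\<Sum>i<L. (b / 2) * (cmod (y i))\<^sup>2 + (cmod (\<delta> i))\<^sup>2 / (2 * b))"
      by (intro sum_mono young_mult_le b)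
    then show ?thesis unfolding Ny_def Nd_def by (simp add: sum.distrib sum_distrib_left sum_divide_distrib)
  qed
  have "b * Ny \<le> Re (\<Sum>i<L. cnj (y i) * \<delta> i)"
    using coercive[of y] unfolding Ny_def by (simp add: solves)
  also have "\<dots> \<le> cmod (\<Sum>i<L. cnj (y i) * \<delta> i)" by (rule complex_Re_le_cmod)
  also have "\<dots> \<le> (\<Sum>i<L. cmod (cnj (y i) * \<delta> i))" by (rule norm_sum)
  also have "\<dots> = (\<Sum>i<L. cmod (y i) * cmod (\<delta> i))" by (simp add: norm_mult)
  finally have "(b / 2) * Ny \<le> Nd / (2 * b)"
    using young by linarith
  then have Ny: "Ny \<le> Nd / b\<^sup>2"
    using b by (simp add: field_simps power2_eq_square)
  have "cmod (\<Sum>i<L. cnj (\<delta> i) * y i) \<le> (\<Sum>i<L. cmod (cnj (\<delta> i) * y i))" by (rule norm_sum)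
  also have "\<dots> = (\<Sum>i<L. cmod (y i) * cmod (\<delta> i))" by (simp add: norm_mult mult.commute)
  also have "\<dots> \<le> (b / 2) * (Nd / b\<^sup>2) + Nd / (2 * b)"
  proof -
    have "(b / 2) * Ny \<le> (b / 2) * (Nd / b\<^sup>2)" using Ny b by (intro mult_left_mono) auto
    with young show ?thesis by linarith
  qed
  also have "\<dots> = Nd / b" using b by (simp add: field_simps power2_eq_square)
  finally show ?thesis unfolding Nd_def .
qed

lemma hermitian_residual_inner_inverse:
  fixes R G :: "nat \<Rightarrow> nat \<Rightarrow> complex" and a :: "nat \<Rightarrow> complex" and s :: real
  assumes RG: "\<And>i j. i < L \<Longrightarrow> j < L \<Longrightarrow> (\<Sum>k<L. R i k * G k j) = (if i = j then 1 else 0)"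
    and herm: "\<And>i j. cnj (R i j) = R j i"
    and a: "(\<Sum>i<L. (cmod (a i))\<^sup>2) = 1"
  shows "(\<Sum>i<L. cnj (complex_of_real s * a i - (\<Sum>j<L. R i j * a j)) * (\<Sum>j<L. G i j * a j))
           = complex_of_real s * (\<Sum>i<L. cnj (a i) * (\<Sum>j<L. G i j * a j)) - 1"
proof -
  define z where "z = (\<lambda>i. \<Sum>j<L. G i j * a j)"
  have Rz: "(\<Sum>j<L. R i j * z j) = a i" if "i < L" for i
    unfolding z_def by (rule sum_mult_inverse_apply[OF RG that])
  have "(\<Sum>i<L. cnj (complex_of_real s * a i - (\<Sum>j<L. R i j * a j)) * z i) =
        (\<Sum>i<L. complex_of_real s * cnj (a i) * z i) - (\<Sum>i<L. (\<Sum>j<L. cnj (R i j) * cnj (a j)) * z i)"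
    by (simp add: algebra_simps sum_subtractf)
  also have "(\<Sum>i<L. (\<Sum>j<L. cnj (R i j) * cnj (a j)) * z i) = (\<Sum>i<L. \<Sum>j<L. cnj (a j) * (R j i * z i))"
    by (simp add: sum_distrib_right sum_distrib_left herm algebra_simps)
  also have "\<dots> = (\<Sum>j<L. \<Sum>i<L. cnj (a j) * (R j i * z i))" by (rule sum.swap)
  also have "\<dots> = (\<Sum>j<L. cnj (a j) * a j)"
    by (intro sum.cong refl) (simp add: sum_distrib_left[symmetric] Rz)
  also have "\<dots> = 1"
    using arg_cong[OF a, of complex_of_real] unfolding of_real_sum complex_norm_square
    by (simp add: mult.commute)
  finally have "(\<Sum>i<L. cnj (complex_of_real s * a i - (\<Sum>j<L. R i j * a j)) * z i) =
                complex_of_real s * (\<Sum>i<L. cnj (a i) * z i) - 1"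
    by (simp add: sum_distrib_left algebra_simps)
  then show ?thesis by (simp only: z_def)
qed

text \<open>With \<open>z = G a\<close>, \<open>\<delta> = s a - R a\<close> and \<open>y = G \<delta> = s z - a\<close>, the previous lemma gives
  \<open>s (s a\<^sup>H z - 1) = s \<delta>\<^sup>H z = \<delta>\<^sup>H a + \<delta>\<^sup>H y\<close>.\<close>
lemma inverse_quadratic_form_error_bound:
  fixes R G :: "nat \<Rightarrow> nat \<Rightarrow> complex" and a :: "nat \<Rightarrow> complex" and s b :: real
  assumes RG: "\<And>i j. i < L \<Longrightarrow> j < L \<Longrightarrow> (\<Sum>k<L. R i k * G k j) = (if i = j then 1 else 0)"
    and GR: "\<And>i j. i < L \<Longrightarrow> j < L \<Longrightarrow> (\<Sum>k<L. G i k * R k j) = (if i = j then 1 else 0)"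
    and herm: "\<And>i j. cnj (R i j) = R j i"
    and coercive: "\<And>x. b * (\<Sum>i<L. (cmod (x i))\<^sup>2) \<le> Re (\<Sum>i<L. cnj (x i) * (\<Sum>j<L. R i j * x j))"
    and b: "b > 0" and s: "s \<ge> b"
    and a: "(\<Sum>i<L. (cmod (a i))\<^sup>2) = 1"
  shows "cmod (complex_of_real s * (\<Sum>i<L. cnj (a i) * (\<Sum>j<L. G i j * a j)) - 1) \<le>
     ((\<Sum>i<L. cmod (complex_of_real s * a i - (\<Sum>j<L. R i j * a j)) * cmod (a i))
      + (\<Sum>i<L. (cmod (complex_of_real s * a i - (\<Sum>j<L. R i j * a j)))\<^sup>2) / b) / s"
proof -
  define \<delta> where "\<delta> = (\<lambda>i. complex_of_real s * a i - (\<Sum>j<L. R i j * a j))"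
  define z where "z = (\<lambda>i. \<Sum>j<L. G i j * a j)"
  define y where "y = (\<lambda>i. \<Sum>j<L. G i j * \<delta> j)"
  define \<epsilon> where "\<epsilon> = complex_of_real s * (\<Sum>i<L. cnj (a i) * z i) - 1"
  have Ry: "(\<Sum>j<L. R i j * y j) = \<delta> i" if "i < L" for i
    unfolding y_def by (rule sum_mult_inverse_apply[OF RG that])
  have y: "y i = complex_of_real s * z i - a i" if "i < L" for i
    using sum_mult_inverse_apply[OF GR that, of a]
    by (simp add: y_def z_def \<delta>_def algebra_simps sum_subtractf sum_distrib_left)
  have "(\<Sum>i<L. cnj (\<delta> i) * z i) = \<epsilon>"
    unfolding \<delta>_def z_def \<epsilon>_def by (rule hermitian_residual_inner_inverse[OF RG herm a])
  then have "complex_of_real s * \<epsilon> = (\<Sum>i<L. cnj (\<delta> i) * (a i + y i))"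
    by (auto simp: sum_distrib_left algebra_simps y intro!: sum.cong)
  then have s_eps: "complex_of_real s * \<epsilon> = (\<Sum>i<L. cnj (\<delta> i) * a i) + (\<Sum>i<L. cnj (\<delta> i) * y i)"
    by (simp add: distrib_left sum.distrib)
  have "s * cmod \<epsilon> = cmod (complex_of_real s * \<epsilon>)" using b s by (simp add: norm_mult)
  also have "\<dots> \<le> cmod (\<Sum>i<L. cnj (\<delta> i) * a i) + cmod (\<Sum>i<L. cnj (\<delta> i) * y i)"
    unfolding s_eps by (rule norm_triangle_ineq)
  also have "\<dots> \<le> (\<Sum>i<L. cmod (\<delta> i) * cmod (a i)) + (\<Sum>i<L. (cmod (\<delta> i))\<^sup>2) / b"
    using norm_sum[of "\<lambda>i. cnj (\<delta> i) * a i" "{..<L}"] coercive_solution_bound[OF coercive b Ry]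
    by (intro add_mono) (auto simp: norm_mult)
  finally show ?thesis
    using b s unfolding \<epsilon>_def z_def \<delta>_def by (simp add: field_simps)
qed

section \<open>The error bound\<close>

definition steer_residual :: "(real \<Rightarrow> real) \<Rightarrow> nat \<Rightarrow> real \<Rightarrow> nat \<Rightarrow> complex" where
  "steer_residual S L \<nu> i =
     complex_of_real (S \<nu>) * steer L \<nu> $ i - (\<Sum>j<L. covar S (int i - int j) * steer L \<nu> $ j)"

lemma toeplitz_cov_inverse:
  fixes S :: "real \<Rightarrow> real" and L :: nat
  assumes S: "continuous_on {0..1} S" and b: "b > 0" and Sb: "\<And>\<nu>. \<nu> \<in> {0..1} \<Longrightarrow> b \<le> S \<nu>"
  defines "G \<equiv> the (mat_inverse (toeplitz_cov S L))"
  shows "G \<in> carrier_mat L L"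
    and "\<And>i j. i < L \<Longrightarrow> j < L \<Longrightarrow> (\<Sum>k<L. covar S (int i - int k) * G $$ (k, j)) = (if i = j then 1 else 0)"
    and "\<And>i j. i < L \<Longrightarrow> j < L \<Longrightarrow> (\<Sum>k<L. G $$ (i, k) * covar S (int k - int j)) = (if i = j then 1 else 0)"
proof -
  define R where "R = toeplitz_cov S L"
  have R: "R \<in> carrier_mat L L" unfolding R_def toeplitz_cov_def by simp
  have R_ij: "R $$ (i, j) = covar S (int i - int j)" if "i < L" "j < L" for i j
    using that unfolding R_def toeplitz_cov_def by simp
  obtain G' where G': "mat_inverse R = Some G'" "G' \<in> carrier_mat L L" "R * G' = 1\<^sub>m L" "G' * R = 1\<^sub>m L"
    by (rule mat_inverse_coercive[OF R b]) (use toeplitz_quadratic_form_ge[OF S Sb] in \<open>simp add: R_ij\<close>)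
  have G: "G = G'" using G'(1) unfolding G_def R_def by simp
  have "(R * G) $$ (i, j) = (\<Sum>k<L. covar S (int i - int k) * G $$ (k, j))"
    and "(G * R) $$ (i, j) = (\<Sum>k<L. G $$ (i, k) * covar S (int k - int j))"
    if "i < L" "j < L" for i j
    using that R G'(2) unfolding G by (auto simp: scalar_prod_def R_ij lessThan_atLeast0 intro!: sum.cong)
  with G'(2-4) show "G \<in> carrier_mat L L"
    and "\<And>i j. i < L \<Longrightarrow> j < L \<Longrightarrow> (\<Sum>k<L. covar S (int i - int k) * G $$ (k, j)) = (if i = j then 1 else 0)"
    and "\<And>i j. i < L \<Longrightarrow> j < L \<Longrightarrow> (\<Sum>k<L. G $$ (i, k) * covar S (int k - int j)) = (if i = j then 1 else 0)"
    unfolding G by auto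
qed

lemma norm_eps_le_steer_residual:
  fixes S :: "real \<Rightarrow> real"
  assumes S: "continuous_on {0..1} S" and b: "b > 0" and Sb: "\<And>\<nu>. \<nu> \<in> {0..1} \<Longrightarrow> b \<le> S \<nu>"
    and L: "L \<ge> 1" and \<nu>: "\<nu> \<in> {0..1}"
  shows "cmod (eps S L \<nu>) \<le> ((\<Sum>i<L. cmod (steer_residual S L \<nu> i)) / sqrt (real L)
                               + (\<Sum>i<L. (cmod (steer_residual S L \<nu> i))\<^sup>2) / b) / S \<nu>"
proof -
  define G where "G = the (mat_inverse (toeplitz_cov S L))"
  note G = toeplitz_cov_inverse(1)[OF S b Sb, where L = L, folded G_def]
    and RG = toeplitz_cov_inverse(2)[OF S b Sb, where L = L, folded G_def]
    and GR = toeplitz_cov_inverse(3)[OF S b Sb, where L = L, folded G_def]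
  define a where "a = (\<lambda>k. steer L \<nu> $ k)"
  have norm_a: "cmod (a k) = 1 / sqrt (real L)" if "k < L" for k
    using that unfolding a_def steer_def by (simp add: norm_divide)
  have a: "(\<Sum>i<L. (cmod (a i))\<^sup>2) = 1"
    using L by (simp add: norm_a power_divide)
  have "eps S L \<nu> = complex_of_real (S \<nu>) * (\<Sum>i<L. cnj (a i) * (\<Sum>j<L. G $$ (i, j) * a j)) - 1"
    using G unfolding eps_def G_def[symmetric]
    by (auto simp: scalar_prod_def a_def steer_def lessThan_atLeast0 intro!: sum.cong)
  also have "cmod \<dots> \<le> ((\<Sum>i<L. cmod (steer_residual S L \<nu> i) * cmod (a i))
                        + (\<Sum>i<L. (cmod (steer_residual S L \<nu> i))\<^sup>2) / b) / S \<nu>"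
    using inverse_quadratic_form_error_bound[OF RG GR _ toeplitz_quadratic_form_ge[OF S Sb] b Sb[OF \<nu>] a]
      cnj_covar
    by (simp add: steer_residual_def a_def)
  also have "(\<Sum>i<L. cmod (steer_residual S L \<nu> i) * cmod (a i)) =
             (\<Sum>i<L. cmod (steer_residual S L \<nu> i)) / sqrt (real L)"
    by (simp add: norm_a sum_divide_distrib)
  finally show ?thesis .
qed

lemma norm_steer_residual_le:
  fixes S :: "real \<Rightarrow> real"
  assumes S: "continuous_on {0..1} S" and r: "weighted_abs_sum_le \<gamma> (covar S) C" and \<gamma>: "\<gamma> > 0"
    and \<nu>: "\<nu> \<in> {0..1}" and i: "i < L"
  shows "cmod (steer_residual S L \<nu> i)
           \<le> (\<Sum>\<^sub>\<infinity>n\<in>- {int i - int L + 1..int i}. cmod (covar S n)) / sqrt (real L)"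
proof -
  define e where "e = (\<lambda>n. covar S n * cis (- (2 * pi * \<nu> * real_of_int n)))"
  define A where "A = {int i - int L + 1..int i}"
  define c where "c = cis (2 * pi * \<nu> * real i) / complex_of_real (sqrt (real L))"
  have norm_e: "norm (e n) = cmod (covar S n)" for n unfolding e_def by (simp add: norm_mult)
  have abs_summable: "(\<lambda>n. norm (e n)) summable_on B" for B
    unfolding norm_e using weighted_tail_bound(1)[OF r less_imp_le[OF \<gamma>] order.refl] by simp
  have "complex_of_real (S \<nu>) = (\<Sum>\<^sub>\<infinity>n\<in>A \<union> - A. e n)"
    using fourier_inversion[OF S r \<gamma> \<nu>] unfolding fourier_sum_def e_def by simp
  also have "\<dots> = (\<Sum>n\<in>A. e n) + (\<Sum>\<^sub>\<infinity>n\<in>- A. e n)"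
    by (subst infsum_Un_disjoint) (auto intro: abs_summable_summable abs_summable simp: A_def)
  finally have S_split: "complex_of_real (S \<nu>) = (\<Sum>n\<in>A. e n) + (\<Sum>\<^sub>\<infinity>n\<in>- A. e n)" .
  have reindex: "(\<Sum>n\<in>A. e n) = (\<Sum>j<L. e (int i - int j))"
    unfolding A_def by (rule sum.reindex_bij_witness[of _ "\<lambda>j. int i - int j" "\<lambda>n. nat (int i - n)"]) auto
  have "(\<Sum>j<L. covar S (int i - int j) * steer L \<nu> $ j) = (\<Sum>j<L. c * e (int i - int j))"
  proof (intro sum.cong refl)
    fix j assume "j \<in> {..<L}"
    have "cis (2 * pi * \<nu> * real i) * cis (- (2 * pi * \<nu> * real_of_int (int i - int j))) = cis (2 * pi * \<nu> * real j)"
      by (simp add: cis_mult algebra_simps)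
    with \<open>j \<in> {..<L}\<close> show "covar S (int i - int j) * steer L \<nu> $ j = c * e (int i - int j)"
      unfolding c_def e_def steer_def by (simp add: field_simps)
  qed
  also have "\<dots> = c * (\<Sum>n\<in>A. e n)" by (simp add: reindex sum_distrib_left)
  finally have "steer_residual S L \<nu> i = c * (\<Sum>\<^sub>\<infinity>n\<in>- A. e n)"
    using i unfolding steer_residual_def S_split by (simp add: steer_def c_def algebra_simps add_divide_distrib)
  also have "cmod \<dots> \<le> cmod c * (\<Sum>\<^sub>\<infinity>n\<in>- A. cmod (covar S n))"
    unfolding norm_mult using norm_infsum_bound[OF abs_summable] norm_e
    by (intro mult_left_mono) auto
  finally show ?thesis unfolding c_def A_def by (simp add: norm_divide)
qed

lemma infsum_finite_sum:
  fixes f :: "'i \<Rightarrow> 'a \<Rightarrow> real"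
  assumes "finite I" and "\<And>i. i \<in> I \<Longrightarrow> f i summable_on A"
  shows "(\<Sum>\<^sub>\<infinity>x\<in>A. \<Sum>i\<in>I. f i x) = (\<Sum>i\<in>I. \<Sum>\<^sub>\<infinity>x\<in>A. f i x)"
    "(\<lambda>x. \<Sum>i\<in>I. f i x) summable_on A"
  using assms by (induction I rule: finite_induct) (simp_all add: infsum_add summable_on_add)

lemma card_windows_excluding_le:
  fixes n :: int and L :: nat
  shows "(\<Sum>i<L. if n \<in> - {int i - int L + 1..int i} then 1 else 0) \<le> min \<bar>real_of_int n\<bar> (real L)"
proof -
  define W where "W = {i. i < L \<and> n \<in> - {int i - int L + 1..int i}}"
  have "(\<Sum>i<L. if n \<in> - {int i - int L + 1..int i} then 1 else (0::real)) = real (card W)"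
    by (simp add: W_def sum.If_cases lessThan_def Int_def)
  moreover have "card W \<le> L"
    by (rule order_trans[OF card_mono[of "{..<L}"]]) (auto simp: W_def)
  moreover have "real (card W) \<le> \<bar>real_of_int n\<bar>"
  proof (cases "n \<ge> 0")
    case True
    then have "card W \<le> card {..<nat n}" by (intro card_mono) (auto simp: W_def)
    then show ?thesis using True by simp
  next
    case False
    then have "card W \<le> card {nat (int L + n)..<L}" by (intro card_mono) (auto simp: W_def)
    then show ?thesis using False by simp
  qed
  ultimately show ?thesis by simp
qed

lemma min_le_powr_mult_powr:
  fixes u g \<gamma> :: real and L :: nat
  assumes u: "u \<ge> 0" and L: "L \<ge> 1" and g: "0 \<le> g" "g \<le> 1" "g \<le> \<gamma>"
  shows "min u (real L) \<le> real L powr (1 - g) * (1 + u) powr \<gamma>"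
proof -
  define m where "m = min (1 + u) (real L)"
  have m0: "m > 0" using u L unfolding m_def by auto
  have "min u (real L) \<le> m" unfolding m_def by auto
  also have "m = m powr (1 - g) * m powr g" using m0 by (simp add: powr_add[symmetric])
  also have "\<dots> \<le> real L powr (1 - g) * (1 + u) powr g"
    using m0 g by (intro mult_mono powr_mono2) (auto simp: m_def)
  also have "\<dots> \<le> real L powr (1 - g) * (1 + u) powr \<gamma>"
    using u g by (intro mult_left_mono powr_mono) auto
  finally show ?thesis .
qed

lemma sum_window_tails_le:
  fixes r :: "int \<Rightarrow> complex" and L :: nat
  assumes r: "weighted_abs_sum_le \<gamma> r C" and L: "L \<ge> 1" and g: "0 \<le> g" "g \<le> 1" "g \<le> \<gamma>"
  shows "(\<Sum>i<L. \<Sum>\<^sub>\<infinity>n\<in>- {int i - int L + 1..int i}. cmod (r n)) \<le> real L powr (1 - g) * C"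
proof -
  define W where "W = (\<lambda>n. (1 + \<bar>real_of_int n\<bar>) powr \<gamma> * cmod (r n))"
  have W: "W summable_on UNIV" "(\<Sum>\<^sub>\<infinity>n. W n) \<le> C"
    using r unfolding weighted_abs_sum_le_def W_def by auto
  define B where "B = (\<lambda>i::nat. - {int i - int L + 1..int i})"
  define f where "f = (\<lambda>i n. if n \<in> B i then cmod (r n) else 0)"
  have f: "f i summable_on UNIV" for i
    using weighted_tail_bound(1)[OF r _ order.refl, of "B i"] g unfolding f_def
    by (subst summable_on_cong_neutral[where T = "B i"]) auto
  have "(\<Sum>i<L. \<Sum>\<^sub>\<infinity>n\<in>B i. cmod (r n)) = (\<Sum>\<^sub>\<infinity>n. \<Sum>i<L. f i n)"
    unfolding infsum_finite_sum(1)[OF _ f, of "{..<L}", simplified]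
    unfolding f_def by (intro sum.cong refl infsum_cong_neutral) auto
  also have "\<dots> \<le> (\<Sum>\<^sub>\<infinity>n. real L powr (1 - g) * W n)"
  proof (rule infsum_mono[OF infsum_finite_sum(2)[OF _ f] summable_on_cmult_right[OF W(1)]])
    fix n :: int
    have "(\<Sum>i<L. f i n) = (\<Sum>i<L. if n \<in> B i then 1 else 0) * cmod (r n)"
      unfolding f_def sum_distrib_right by (intro sum.cong refl) simp
    also have "\<dots> \<le> min \<bar>real_of_int n\<bar> (real L) * cmod (r n)"
      unfolding B_def by (intro mult_right_mono card_windows_excluding_le) auto
    also have "\<dots> \<le> real L powr (1 - g) * W n"
      unfolding W_def mult.assoc[symmetric] by (intro mult_right_mono min_le_powr_mult_powr L g) auto
    finally show "(\<Sum>i<L. f i n) \<le> real L powr (1 - g) * W n" .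
  qed simp
  also have "\<dots> \<le> real L powr (1 - g) * C"
    using W by (simp add: infsum_cmult_right mult_left_mono)
  finally show ?thesis unfolding B_def .
qed

lemma steer_residual_sums_le:
  fixes S :: "real \<Rightarrow> real"
  assumes S: "continuous_on {0..1} S" and r: "weighted_abs_sum_le \<gamma> (covar S) C" and \<gamma>: "\<gamma> > 0"
    and L: "L \<ge> 1" and \<nu>: "\<nu> \<in> {0..1}" and g: "0 \<le> g" "g \<le> 1" "g \<le> \<gamma>"
  shows "(\<Sum>i<L. cmod (steer_residual S L \<nu> i)) / sqrt (real L) \<le> C / real L powr g"
    and "(\<Sum>i<L. (cmod (steer_residual S L \<nu> i))\<^sup>2) \<le> C * (C / real L powr g)"
proof -
  define \<tau> where "\<tau> = (\<lambda>i::nat. \<Sum>\<^sub>\<infinity>n\<in>- {int i - int L + 1..int i}. cmod (covar S n))"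
  define T where "T = (\<Sum>i<L. \<tau> i)"
  have L0: "real L > 0" using L by simp
  have \<tau>_nonneg: "\<tau> i \<ge> 0" for i unfolding \<tau>_def by (rule infsum_nonneg) simp
  have \<tau>_le: "\<tau> i \<le> C" for i
    using weighted_tail_bound(2)[OF r less_imp_le[OF \<gamma>] order.refl] unfolding \<tau>_def by simp
  have \<delta>: "cmod (steer_residual S L \<nu> i) \<le> \<tau> i / sqrt (real L)" if "i < L" for i
    unfolding \<tau>_def by (rule norm_steer_residual_le[OF S r \<gamma> \<nu> that])
  have T_le: "T / real L \<le> C / real L powr g"
  proof -
    have "T / real L \<le> real L powr (1 - g) * C / real L"
      using sum_window_tails_le[OF r L g] L0 unfolding T_def \<tau>_def by (simp add: divide_right_mono)
    also have "\<dots> = C / real L powr g" using L0 by (simp add: powr_diff field_simps)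
    finally show ?thesis .
  qed
  have "(\<Sum>i<L. cmod (steer_residual S L \<nu> i)) \<le> (\<Sum>i<L. \<tau> i / sqrt (real L))"
    using \<delta> by (intro sum_mono) auto
  also have "\<dots> = T / sqrt (real L)" by (simp add: T_def sum_divide_distrib)
  finally have "(\<Sum>i<L. cmod (steer_residual S L \<nu> i)) / sqrt (real L) \<le> T / sqrt (real L) / sqrt (real L)"
    by (rule divide_right_mono) simp
  also have "T / sqrt (real L) / sqrt (real L) = T / real L"
    using real_sqrt_mult_self[of "real L"] by (simp add: divide_divide_eq_left)
  finally show "(\<Sum>i<L. cmod (steer_residual S L \<nu> i)) / sqrt (real L) \<le> C / real L powr g"
    using T_le by linarith
  have "(\<Sum>i<L. (cmod (steer_residual S L \<nu> i))\<^sup>2) \<le> (\<Sum>i<L. (\<tau> i / sqrt (real L))\<^sup>2)"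
    using \<delta> by (intro sum_mono power_mono) auto
  also have "\<dots> \<le> (\<Sum>i<L. C * \<tau> i / real L)"
    using \<tau>_nonneg \<tau>_le L0
    by (intro sum_mono) (simp add: power_divide power2_eq_square divide_right_mono mult_right_mono)
  also have "\<dots> = C * (T / real L)" by (simp add: T_def sum_distrib_left sum_divide_distrib)
  also have "\<dots> \<le> C * (C / real L powr g)"
    using T_le weighted_abs_sum_le_nonneg[OF r] by (rule mult_left_mono)
  finally show "(\<Sum>i<L. (cmod (steer_residual S L \<nu> i))\<^sup>2) \<le> C * (C / real L powr g)" .
qed

lemma norm_eps_le:
  fixes S :: "real \<Rightarrow> real"
  assumes S: "continuous_on {0..1} S" and b: "b > 0" and Sb: "\<And>\<nu>. \<nu> \<in> {0..1} \<Longrightarrow> b \<le> S \<nu>"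
    and r: "weighted_abs_sum_le \<gamma> (covar S) C" and \<gamma>: "\<gamma> > 0"
    and L: "L \<ge> 1" and \<nu>: "\<nu> \<in> {0..1}" and g: "0 \<le> g" "g \<le> 1" "g \<le> \<gamma>"
  shows "cmod (eps S L \<nu>) \<le> ((C + C * C / b) / b) / real L powr g"
proof -
  have C: "C \<ge> 0" by (rule weighted_abs_sum_le_nonneg[OF r])
  note sums = steer_residual_sums_le[OF S r \<gamma> L \<nu> g]
  have "cmod (eps S L \<nu>) \<le> (C / real L powr g + C * (C / real L powr g) / b) / S \<nu>"
    using norm_eps_le_steer_residual[OF S b Sb L \<nu>] sums b Sb[OF \<nu>]
    by (smt (verit) divide_right_mono frac_le)
  also have "\<dots> \<le> (C / real L powr g + C * (C / real L powr g) / b) / b"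
    using Sb[OF \<nu>] b C by (intro divide_left_mono) auto
  also have "\<dots> = ((C + C * C / b) / b) / real L powr g"
    using b L by (simp add: field_simps)
  finally show ?thesis .
qed

lemma divide_le_ln_divide:
  fixes K x :: real
  assumes "K \<ge> 0" and "x \<ge> 2"
  shows "K / x \<le> (K / ln 2) * ln x / x"
proof -
  have "ln 2 \<le> ln x" using assms(2) by simp
  then have "K * 1 \<le> K * (ln x / ln 2)" using assms(1) by (intro mult_left_mono) auto
  then show ?thesis using assms(2) by (simp add: field_simps)
qed

theorem lemma5p3:
  fixes S :: "nat \<Rightarrow> real \<Rightarrow> real" and \<gamma>\<^sub>0 :: real
  assumes cont: "\<And>m. m \<ge> 1 \<Longrightarrow> continuous_on {0..1} (S m)"
    and A3_upper: "\<exists>B. \<forall>m\<ge>1. \<forall>\<nu>\<in>{0..1}. S m \<nu> \<le> B"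
    and A3_lower: "\<exists>b>0. \<forall>m\<ge>1. \<forall>\<nu>\<in>{0..1}. b \<le> S m \<nu>"
    and \<gamma>0_pos: "\<gamma>\<^sub>0 > 0"
    and A5: "\<exists>C. \<forall>m\<ge>1.
        (\<lambda>n::int. (1 + \<bar>real_of_int n\<bar>) powr \<gamma>\<^sub>0 * cmod (covar (S m) n)) summable_on UNIV \<and>
        (\<Sum>\<^sub>\<infinity>n::int. (1 + \<bar>real_of_int n\<bar>) powr \<gamma>\<^sub>0 * cmod (covar (S m) n)) \<le> C"
  shows "(\<forall>\<gamma>. \<gamma> < \<gamma>\<^sub>0 \<and> \<gamma> \<noteq> 1 \<longrightarrow>
            (\<exists>\<kappa>. \<forall>L\<ge>1. \<forall>m\<ge>1. \<forall>\<nu>\<in>{0..1}.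
               cmod (eps (S m) L \<nu>) \<le> \<kappa> / real L powr (min \<gamma> 1)))
       \<and> (1 < \<gamma>\<^sub>0 \<longrightarrow>
            (\<exists>\<kappa>. \<forall>L\<ge>2. \<forall>m\<ge>1. \<forall>\<nu>\<in>{0..1}.
               cmod (eps (S m) L \<nu>) \<le> \<kappa> * ln (real L) / real L))"
proof -
  obtain b where b: "b > 0" and Sb: "\<And>m \<nu>. m \<ge> 1 \<Longrightarrow> \<nu> \<in> {0..1} \<Longrightarrow> b \<le> S m \<nu>"
    using A3_lower by blast
  obtain C where r: "\<And>m. m \<ge> 1 \<Longrightarrow> weighted_abs_sum_le \<gamma>\<^sub>0 (covar (S m)) C"
    using A5 unfolding weighted_abs_sum_le_def by blast
  define K where "K = (C + C * C / b) / b"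
  have K: "K \<ge> 0" using weighted_abs_sum_le_nonneg[OF r[of 1]] b by (simp add: K_def)
  have bound: "cmod (eps (S m) L \<nu>) \<le> K / real L powr g"
    if "m \<ge> 1" "L \<ge> 1" "\<nu> \<in> {0..1}" "0 \<le> g" "g \<le> 1" "g \<le> \<gamma>\<^sub>0" for m L \<nu> g
    unfolding K_def using that by (intro norm_eps_le[OF cont b Sb r \<gamma>0_pos]) auto
  have power: "cmod (eps (S m) L \<nu>) \<le> K / real L powr (min \<gamma> 1)"
    if "\<gamma> < \<gamma>\<^sub>0" "L \<ge> 1" "m \<ge> 1" "\<nu> \<in> {0..1}" for \<gamma> L m \<nu>
  proof -
    have "cmod (eps (S m) L \<nu>) \<le> K / real L powr (max 0 (min \<gamma> 1))"
      using that \<gamma>0_pos by (intro bound) auto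
    also have "\<dots> \<le> K / real L powr (min \<gamma> 1)"
      using that K by (intro divide_left_mono powr_mono) auto
    finally show ?thesis .
  qed
  have logarithmic: "cmod (eps (S m) L \<nu>) \<le> (K / ln 2) * ln (real L) / real L"
    if "1 < \<gamma>\<^sub>0" "L \<ge> 2" "m \<ge> 1" "\<nu> \<in> {0..1}" for L m \<nu>
    using bound[of m L \<nu> 1] divide_le_ln_divide[OF K, of "real L"] that by simp
  show ?thesis
  proof (intro conjI allI impI)
    fix \<gamma> assume "\<gamma> < \<gamma>\<^sub>0 \<and> \<gamma> \<noteq> 1"
    with power show "\<exists>\<kappa>. \<forall>L\<ge>1. \<forall>m\<ge>1. \<forall>\<nu>\<in>{0..1}. cmod (eps (S m) L \<nu>) \<le> \<kappa> / real L powr (min \<gamma> 1)"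
      by blast
  next
    assume "1 < \<gamma>\<^sub>0"
    with logarithmic show "\<exists>\<kappa>. \<forall>L\<ge>2. \<forall>m\<ge>1. \<forall>\<nu>\<in>{0..1}. cmod (eps (S m) L \<nu>) \<le> \<kappa> * ln (real L) / real L"
      by blast
  qed
qed

end
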